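(* Let $p\ge5$ and let $\rho$ be the rightmost assignment on the white metallic tree. For every node $\nu$ of $\mathcal W_\rho$, the integer whose nzm-code is the nzm-code of $\nu$ followed by the digit $1$ (the successor of $\nu$) is a son of $\nu$ in $\mathcal W_\rho$, and no other son of $\nu$ in $\mathcal W_\rho$ has an nzm-code ending with $1$. Moreover, $\rho$ is the unique assignment $\alpha$ such that, for every node $\nu$, the successor of $\nu$ is a son of $\nu$ in $\mathcal W_\alpha$.
   Context: Fix $p\ge5$. Metallic numbers: $m_{-1}=0$, $m_0=1$, $m_{n+2}=(p-2)m_{n+1}-m_n$. With $x=p-2$, $d=p-3$, the nzm-code of a positive integer $n$ is the unique word $a_k\cdots a_0$ over $\{1,\dots,p-2\}$ with $n=\sum a_im_i$ containing no factor $x\,d^j\,x$ ($j\ge0$). White metallic tree under an assignment $\alpha$, $\mathcal W_\alpha$: nodes are the positive integers, each black or white; root $1$ is white; nodes are processed in increasing order, node $\nu$ receives $p-2$ sons if white and $p-3$ sons if black, namely the smallest integers not yet used, in increasing order; an assignment specifies for each node the position (leftmost $=1$) of its unique black son among its sons, other sons being white. The rightmost assignment $\rho$ always puts the black son at the last position. *)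

theory Defs
  imports Main
begin

text \<open>Metallic numbers, shifted: metallic p i = m_i for i >= 0 (m_0 = 1, m_1 = p-2).\<close>
fun metallic :: "nat \<Rightarrow> nat \<Rightarrow> int" where
  "metallic p 0 = 1"
| "metallic p (Suc 0) = int p - 2"
| "metallic p (Suc (Suc n)) = (int p - 2) * metallic p (Suc n) - metallic p n"

text \<open>Words a_k ... a_0 are stored little-endian: the list [a_0, a_1, ..., a_k].\<close>
definition word_val :: "nat \<Rightarrow> nat list \<Rightarrow> int" where
  "word_val p w = (\<Sum>i<length w. int (w ! i) * metallic p i)"

text \<open>w contains a factor x d^j x with x = p-2, d = p-3, j >= 0.\<close>
definition has_forbidden :: "nat \<Rightarrow> nat list \<Rightarrow> bool" where
  "has_forbidden p w = (\<exists>i j. i < j \<and> j < length w \<and> w ! i = p - 2 \<and> w ! j = p - 2 \<and>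
       (\<forall>k. i < k \<and> k < j \<longrightarrow> w ! k = p - 3))"

definition nzm_word :: "nat \<Rightarrow> nat list \<Rightarrow> bool" where
  "nzm_word p w = (w \<noteq> [] \<and> set w \<subseteq> {1..p-2} \<and> \<not> has_forbidden p w)"

definition nzm_code :: "nat \<Rightarrow> nat \<Rightarrow> nat list" where
  "nzm_code p n = (THE w. nzm_word p w \<and> word_val p w = int n)"

text \<open>Successor: the positive integer whose nzm-code is code(nu) followed by the digit 1
  (i.e. the new last digit a_0 is 1, little-endian: 1 prepended).\<close>
definition nzm_succ :: "nat \<Rightarrow> nat \<Rightarrow> nat" where
  "nzm_succ p \<nu> = (THE n. 0 < n \<and> nzm_code p n = 1 # nzm_code p \<nu>)"

text \<open>White metallic tree under assignment alpha. build p alpha k = (N, c) after processing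
  nodes 1..k: N is the smallest unused integer, c gives colours (True = white) of nodes < N.\<close>
primrec build :: "nat \<Rightarrow> (nat \<Rightarrow> nat) \<Rightarrow> nat \<Rightarrow> nat \<times> (nat \<Rightarrow> bool)" where
  "build p \<alpha> 0 = (2, \<lambda>v. v = 1)"
| "build p \<alpha> (Suc k) =
     (let (N, c) = build p \<alpha> k;
          dg = (if c (Suc k) then p - 2 else p - 3)
      in (N + dg, \<lambda>v. if N \<le> v \<and> v < N + dg then v \<noteq> N + \<alpha> (Suc k) - 1 else c v))"

definition white :: "nat \<Rightarrow> (nat \<Rightarrow> nat) \<Rightarrow> nat \<Rightarrow> bool" where
  "white p \<alpha> \<nu> = snd (build p \<alpha> \<nu>) \<nu>"

definition nsons :: "nat \<Rightarrow> (nat \<Rightarrow> nat) \<Rightarrow> nat \<Rightarrow> nat" where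
  "nsons p \<alpha> \<nu> = fst (build p \<alpha> \<nu>) - fst (build p \<alpha> (\<nu> - 1))"

definition is_son :: "nat \<Rightarrow> (nat \<Rightarrow> nat) \<Rightarrow> nat \<Rightarrow> nat \<Rightarrow> bool" where
  "is_son p \<alpha> \<nu> \<mu> = (1 \<le> \<nu> \<and> fst (build p \<alpha> (\<nu> - 1)) \<le> \<mu> \<and> \<mu> < fst (build p \<alpha> \<nu>))"

text \<open>An assignment: position (leftmost = 1) of the black son among the sons of each node nu >= 1.\<close>
definition valid_assignment :: "nat \<Rightarrow> (nat \<Rightarrow> nat) \<Rightarrow> bool" where
  "valid_assignment p \<alpha> = (\<forall>\<nu>\<ge>1. 1 \<le> \<alpha> \<nu> \<and> \<alpha> \<nu> \<le> nsons p \<alpha> \<nu>)"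

definition is_rightmost :: "nat \<Rightarrow> (nat \<Rightarrow> nat) \<Rightarrow> bool" where
  "is_rightmost p \<alpha> = (\<forall>\<nu>\<ge>1. \<alpha> \<nu> = nsons p \<alpha> \<nu>)"

end

theory Submission
  imports Defs
begin

(* The admissible words of length k (digits in 1..p-2, no factor x d^j x) have values filling
   the interval [S k, S (k+1)), where S k = m_0 + ... + m_(k-1), and values compare
   lexicographically from the top digit; this gives existence and uniqueness of nzm-codes.
   For a number k, the words a # code k with 1 <= a <= a_max k have consecutive values, where
   a_max k = p - 2 unless x # code k contains a forbidden factor, in which case a_max k = p - 3;
   the next value is the successor of k + 1, so succ (k + 1) = succ k + a_max k. Moreover
   a_max k = p - 3 exactly when k + 1 is itself a successor. Thus the successors grow exactly as
   the rightmost tree hands out sons, the black nodes being the successors: the sons of node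
   k + 1 are succ k + 1, ..., succ (k + 1), the last one black. *)

fun dstar_x_prefix :: "nat \<Rightarrow> nat list \<Rightarrow> bool" where
  "dstar_x_prefix p [] = False"
| "dstar_x_prefix p (a # w) = (a = p - 2 \<or> (a = p - 3 \<and> dstar_x_prefix p w))"

fun x_dstar_suffix :: "nat \<Rightarrow> nat list \<Rightarrow> bool" where
  "x_dstar_suffix p [] = False"
| "x_dstar_suffix p (a # w) = (x_dstar_suffix p w \<or> (a = p - 2 \<and> (\<forall>b\<in>set w. b = p - 3)))"

lemma dstar_x_prefix_iff_nth:
  "dstar_x_prefix p w \<longleftrightarrow> (\<exists>j<length w. w ! j = p - 2 \<and> (\<forall>k<j. w ! k = p - 3))"
  by (induction w) (auto simp: Ex_less_Suc2 All_less_Suc2)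

lemma dstar_x_prefix_snoc:
  "dstar_x_prefix p (w @ [a]) \<longleftrightarrow> dstar_x_prefix p w \<or> ((\<forall>b\<in>set w. b = p - 3) \<and> a = p - 2)"
  by (induction w) auto

lemma x_dstar_suffix_snoc:
  "x_dstar_suffix p (w @ [a]) \<longleftrightarrow> a = p - 2 \<or> (a = p - 3 \<and> x_dstar_suffix p w)"
  by (induction w) auto

lemma has_forbidden_Nil [simp]: "\<not> has_forbidden p []"
  by (simp add: has_forbidden_def)

lemma has_forbidden_Cons [simp]:
  "has_forbidden p (a # w) \<longleftrightarrow> has_forbidden p w \<or> (a = p - 2 \<and> dstar_x_prefix p w)"
proof
  assume "has_forbidden p (a # w)"
  then obtain i j where ij: "i < j" "j < Suc (length w)" "(a # w) ! i = p - 2" "(a # w) ! j = p - 2"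
    "\<forall>k. i < k \<and> k < j \<longrightarrow> (a # w) ! k = p - 3"
    unfolding has_forbidden_def by auto
  obtain j' where j': "j = Suc j'" using ij(1) by (cases j) auto
  show "has_forbidden p w \<or> (a = p - 2 \<and> dstar_x_prefix p w)"
  proof (cases i)
    case 0
    have "\<forall>k<j'. w ! k = p - 3" using ij(5) 0 j' by force
    then show ?thesis using ij 0 j' by (auto simp: dstar_x_prefix_iff_nth)
  next
    case (Suc i')
    have "\<forall>k. i' < k \<and> k < j' \<longrightarrow> w ! k = p - 3" using ij(5) Suc j' by force
    then show ?thesis using ij Suc j' unfolding has_forbidden_def by auto
  qed
next
  assume "has_forbidden p w \<or> (a = p - 2 \<and> dstar_x_prefix p w)"
  then show "has_forbidden p (a # w)"
  proof
    assume "has_forbidden p w"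
    then obtain i j where "i < j" "j < length w" "w ! i = p - 2" "w ! j = p - 2"
      and between: "\<forall>k. i < k \<and> k < j \<longrightarrow> w ! k = p - 3"
      unfolding has_forbidden_def by blast
    moreover have "\<forall>k. Suc i < k \<and> k < Suc j \<longrightarrow> (a # w) ! k = p - 3"
      using between by (auto simp: nth_Cons split: nat.splits)
    ultimately show ?thesis unfolding has_forbidden_def
      by (intro exI[of _ "Suc i"] exI[of _ "Suc j"]) auto
  next
    assume "a = p - 2 \<and> dstar_x_prefix p w"
    then obtain j where "a = p - 2" "j < length w" "w ! j = p - 2" and before: "\<forall>k<j. w ! k = p - 3"
      unfolding dstar_x_prefix_iff_nth by blast
    moreover have "\<forall>k. 0 < k \<and> k < Suc j \<longrightarrow> (a # w) ! k = p - 3"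
      using before by (auto simp: nth_Cons split: nat.splits)
    ultimately show ?thesis unfolding has_forbidden_def
      by (intro exI[of _ 0] exI[of _ "Suc j"]) auto
  qed
qed

lemma has_forbidden_snoc:
  "has_forbidden p (w @ [a]) \<longleftrightarrow> has_forbidden p w \<or> (a = p - 2 \<and> x_dstar_suffix p w)"
  by (induction w) (auto simp: dstar_x_prefix_snoc)

definition admissible :: "nat \<Rightarrow> nat list \<Rightarrow> bool" where
  "admissible p w \<longleftrightarrow> set w \<subseteq> {1..p - 2} \<and> \<not> has_forbidden p w"

lemma nzm_word_iff_admissible: "nzm_word p w \<longleftrightarrow> admissible p w \<and> w \<noteq> []"
  by (auto simp: nzm_word_def admissible_def)

lemma admissible_Nil [simp]: "admissible p []"
  by (simp add: admissible_def)

lemma admissible_Cons: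
  "admissible p (a # w) \<longleftrightarrow> admissible p w \<and> 1 \<le> a \<and> a \<le> p - 2 \<and> \<not> (a = p - 2 \<and> dstar_x_prefix p w)"
  by (auto simp: admissible_def)

lemma admissible_snoc:
  "admissible p (w @ [a]) \<longleftrightarrow> admissible p w \<and> 1 \<le> a \<and> a \<le> p - 2 \<and> \<not> (a = p - 2 \<and> x_dstar_suffix p w)"
  by (auto simp: admissible_def has_forbidden_snoc)

lemma word_val_Nil [simp]: "word_val p [] = 0"
  by (simp add: word_val_def)

lemma word_val_snoc: "word_val p (w @ [a]) = word_val p w + int a * metallic p (length w)"
  by (simp add: word_val_def nth_append)

lemma word_val_Cons_diff: "word_val p (a # w) - int a = word_val p (b # w) - int b"
  unfolding word_val_def by (simp add: sum.lessThan_Suc_shift del: sum.lessThan_Suc)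

definition metallic_sum :: "nat \<Rightarrow> nat \<Rightarrow> int" where
  "metallic_sum p k = (\<Sum>i<k. metallic p i)"

lemma metallic_sum_0 [simp]: "metallic_sum p 0 = 0"
  and metallic_sum_Suc [simp]: "metallic_sum p (Suc k) = metallic_sum p k + metallic p k"
  by (simp_all add: metallic_sum_def)

lemma metallic_Suc_eq:
  "metallic p (Suc k) = (int p - 3) * metallic p k + (int p - 4) * metallic_sum p k + 1"
  by (induction k) (simp_all add: algebra_simps)

locale metallic_base =
  fixes p :: nat
  assumes p_ge_4: "4 \<le> p"
begin

lemma metallic_ge_1: "1 \<le> metallic p i"
proof (induction i rule: less_induct)
  case (less i)
  show ?case
  proof (cases i)
    case (Suc j)
    have "0 \<le> metallic p y" if "y < j" for y
      using less.IH[of y] that Suc by simp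
    then have "0 \<le> metallic_sum p j"
      unfolding metallic_sum_def by (intro sum_nonneg) simp
    then show ?thesis using less.IH[of j] Suc p_ge_4 metallic_Suc_eq[of p j] by simp
  qed simp
qed

lemma metallic_sum_nonneg: "0 \<le> metallic_sum p k"
  unfolding metallic_sum_def using metallic_ge_1 by (auto intro: sum_nonneg order_trans[OF zero_le_one])

lemma metallic_Suc_ge: "(int p - 3) * metallic p i + 1 \<le> metallic p (Suc i)"
  using metallic_Suc_eq[of p i] metallic_sum_nonneg[of i] p_ge_4 by simp

lemma metallic_sum_mono: "k \<le> l \<Longrightarrow> metallic_sum p k \<le> metallic_sum p l"
  unfolding metallic_sum_def by (rule sum_mono2) (use metallic_ge_1 order_trans[OF zero_le_one] in auto)

lemma metallic_sum_Suc_Suc: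
  "metallic_sum p (Suc (Suc k)) = (int p - 2) * metallic p k + (int p - 3) * metallic_sum p k + 1"
  using metallic_Suc_eq[of p k] by (simp add: algebra_simps)

lemma word_val_ge: "admissible p w \<Longrightarrow> metallic_sum p (length w) \<le> word_val p w"
proof (induction w rule: rev_induct)
  case (snoc a w)
  then have "admissible p w" "1 \<le> a" by (auto simp: admissible_snoc)
  moreover have "metallic p (length w) \<le> int a * metallic p (length w)"
    using mult_right_mono[of 1 "int a"] \<open>1 \<le> a\<close> metallic_ge_1[of "length w"] by simp
  ultimately show ?case using snoc.IH by (simp add: word_val_snoc)
qed simp

lemma word_val_nonneg: "admissible p w \<Longrightarrow> 0 \<le> word_val p w"
  using word_val_ge metallic_sum_nonneg order_trans by blast

(* The second bound, needed for the induction, applies exactly when the digit x may be put on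
   top of w. *)
lemma word_val_upper_bounds:
  "admissible p w \<Longrightarrow> word_val p w < metallic_sum p (Suc (length w)) \<and>
     (\<not> x_dstar_suffix p w \<longrightarrow> word_val p w \<le> (int p - 3) * metallic_sum p (length w))"
proof (induction w rule: rev_induct)
  case (snoc a w)
  define m where "m = metallic p (length w)"
  define S where "S = metallic_sum p (length w)"
  have w: "admissible p w" and a: "1 \<le> a" "a \<le> p - 2" "\<not> (a = p - 2 \<and> x_dstar_suffix p w)"
    using snoc.prems by (auto simp: admissible_snoc)
  have IH: "word_val p w < S + m" "\<not> x_dstar_suffix p w \<Longrightarrow> word_val p w \<le> (int p - 3) * S"
    using snoc.IH[OF w] by (auto simp: m_def S_def)
  have val: "word_val p (w @ [a]) = word_val p w + int a * m"
    by (simp add: word_val_snoc m_def)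
  have m: "1 \<le> m" "(int p - 3) * m + 1 \<le> metallic p (Suc (length w))"
    using metallic_ge_1 metallic_Suc_ge by (simp_all add: m_def)
  have S: "0 \<le> S" "metallic_sum p (Suc (Suc (length w))) = (int p - 2) * m + (int p - 3) * S + 1"
    using metallic_sum_nonneg metallic_sum_Suc_Suc by (simp_all add: m_def S_def)
  have first: "word_val p (w @ [a]) < metallic_sum p (Suc (length (w @ [a])))"
  proof (cases "a = p - 2")
    case True
    then show ?thesis using IH(2) a(3) val S p_ge_4 by (simp add: of_nat_diff)
  next
    case False
    then have "int a * m \<le> (int p - 3) * m"
      using a(2) m(1) by (intro mult_right_mono) auto
    then show ?thesis using IH(1) val m(2) by (simp add: m_def S_def)
  qed
  have second: "word_val p (w @ [a]) \<le> (int p - 3) * metallic_sum p (length (w @ [a]))"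
    if "\<not> x_dstar_suffix p (w @ [a])"
  proof (cases "a = p - 3")
    case True
    then show ?thesis using that IH(2) val p_ge_4
      by (simp add: x_dstar_suffix_snoc of_nat_diff m_def S_def algebra_simps)
  next
    case False
    then have "a \<noteq> p - 2" using that by (auto simp: x_dstar_suffix_snoc)
    then have "int a * m \<le> (int p - 4) * m"
      using False a(2) m(1) by (intro mult_right_mono) auto
    moreover have "0 \<le> (int p - 4) * S" using S(1) p_ge_4 by simp
    ultimately show ?thesis using IH(1) val by (simp add: m_def S_def algebra_simps)
  qed
  show ?case using first second by blast
qed simp

lemma word_val_less_metallic_sum: "admissible p w \<Longrightarrow> word_val p w < metallic_sum p (Suc (length w))"
  using word_val_upper_bounds by blast

lemma word_val_less_if_shorter:
  assumes "admissible p u" "admissible p v" "length u < length v"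
  shows "word_val p u < word_val p v"
proof -
  have "word_val p u < metallic_sum p (Suc (length u))"
    using assms(1) by (rule word_val_less_metallic_sum)
  also have "\<dots> \<le> metallic_sum p (length v)"
    using assms(3) by (intro metallic_sum_mono) simp
  also have "\<dots> \<le> word_val p v"
    using assms(2) by (rule word_val_ge)
  finally show ?thesis .
qed

lemma word_val_snoc_less:
  assumes "admissible p u" "admissible p v" "length u = length v" "a < b"
  shows "word_val p (u @ [a]) < word_val p (v @ [b])"
proof -
  define m where "m = metallic p (length u)"
  have "word_val p u < metallic_sum p (length v) + m"
    using word_val_less_metallic_sum[OF assms(1)] assms(3) by (simp add: m_def)
  also have "\<dots> \<le> word_val p v + m"
    using word_val_ge[OF assms(2)] by simp
  finally have "word_val p u + int a * m < word_val p v + (int a + 1) * m"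
    by (simp add: algebra_simps)
  also have "(int a + 1) * m \<le> int b * m"
    using assms(4) metallic_ge_1[of "length u"] by (intro mult_right_mono) (auto simp: m_def)
  finally show ?thesis using assms(3) by (simp add: word_val_snoc m_def)
qed

lemma word_val_inj:
  assumes "admissible p u" "admissible p v" "word_val p u = word_val p v"
  shows "u = v"
proof -
  have "length u = length v"
    using word_val_less_if_shorter[of u v] word_val_less_if_shorter[of v u] assms
    by (metis less_irrefl nat_neq_iff)
  then show ?thesis using assms
  proof (induction u v rule: rev_induct2)
    case (4 a u b v)
    then have uv: "admissible p u" "admissible p v" "length u = length v"
      by (auto simp: admissible_snoc)
    then have "a = b"
      using word_val_snoc_less[OF uv] word_val_snoc_less[OF uv(2,1)] "4.prems"(4)
      by (metis less_irrefl nat_neq_iff)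
    then show ?case using "4.IH" uv "4.prems"(4) by (simp add: word_val_snoc)
  qed auto
qed

lemma word_val_Cons_less_of_length_eq:
  assumes "length u = length v" "admissible p (a # u)" "admissible p (b # v)"
    "word_val p u < word_val p v"
  shows "word_val p (a # u) < word_val p (b # v)"
  using assms
proof (induction u v rule: rev_induct2)
  case (4 c u e v)
  have u: "admissible p u" "admissible p (a # u)" and v: "admissible p v" "admissible p (b # v)"
    using "4.prems"(2,3) admissible_snoc[of p "a # u"] admissible_snoc[of p "b # v"]
    by (auto simp: admissible_Cons)
  have "\<not> e < c"
    using word_val_snoc_less[OF v(1) u(1), of e c] "4.prems"(1,4) by auto
  then consider "c < e" | "c = e" by fastforce
  then show ?case
  proof cases
    case 1
    then show ?thesis using word_val_snoc_less[OF u(2) v(2)] "4.prems"(1) by simp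
  next
    case 2
    then have "word_val p (a # u) < word_val p (b # v)"
      using "4.IH" u v "4.prems" by (simp add: word_val_snoc)
    then show ?thesis using 2 "4.prems"(1) word_val_snoc[of p "a # u"] word_val_snoc[of p "b # v"]
      by simp
  qed
qed auto

lemma word_val_Cons_less:
  assumes au: "admissible p (a # u)" and bv: "admissible p (b # v)"
    and less: "word_val p u < word_val p v"
  shows "word_val p (a # u) < word_val p (b # v)"
proof -
  have "admissible p u" "admissible p v"
    using au bv by (auto simp: admissible_Cons)
  then consider "length u < length v" | "length u = length v"
    using word_val_less_if_shorter[of v u] less by fastforce
  then show ?thesis
  proof cases
    case 1
    then show ?thesis using word_val_less_if_shorter[OF au bv] by simp
  next
    case 2
    then show ?thesis using word_val_Cons_less_of_length_eq au bv less by blast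
  qed
qed

lemma exists_admissible_snoc_with_top_digit:
  assumes any_low: "\<And>n. metallic_sum p k \<le> n \<Longrightarrow> n < metallic_sum p (Suc k) \<Longrightarrow>
      \<exists>u. admissible p u \<and> length u = k \<and> word_val p u = n"
    and open_low: "\<And>n. metallic_sum p k \<le> n \<Longrightarrow> n \<le> (int p - 3) * metallic_sum p k \<Longrightarrow>
      \<exists>u. admissible p u \<and> \<not> x_dstar_suffix p u \<and> length u = k \<and> word_val p u = n"
    and "1 \<le> c" "metallic_sum p (Suc k) \<le> n" "n \<le> int c * metallic p k + (int p - 3) * metallic_sum p k"
  shows "\<exists>u a. admissible p u \<and> length u = k \<and> 1 \<le> a \<and> a \<le> c \<and>
    (a = c \<longrightarrow> \<not> x_dstar_suffix p u) \<and> word_val p (u @ [a]) = n"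
proof -
  define m where "m = metallic p k"
  define S where "S = metallic_sum p k"
  have "0 < m" using metallic_ge_1[of k] by (simp add: m_def)
  show ?thesis
  proof (cases "n - S < int c * m")
    case True
    define q where "q = (n - S) div m"
    define r where "r = (n - S) mod m"
    have r: "0 \<le> r" "r < m" and qr: "n = S + r + q * m"
      using \<open>0 < m\<close> div_mult_mod_eq[of "n - S" m] by (auto simp: q_def r_def)
    have "1 \<le> q"
      using pos_imp_zdiv_pos_iff[OF \<open>0 < m\<close>, of "n - S"] assms(4) by (simp add: q_def m_def S_def)
    moreover have "q < int c"
    proof (rule mult_right_less_imp_less)
      show "q * m < int c * m" using qr r True by linarith
    qed (use \<open>0 < m\<close> in simp)
    moreover obtain u where "admissible p u" "length u = k" "word_val p u = S + r"
      using any_low[of "S + r"] r by (auto simp: m_def S_def)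
    ultimately show ?thesis using qr
      by (intro exI[of _ u] exI[of _ "nat q"]) (auto simp: word_val_snoc m_def)
  next
    case False
    obtain u where "admissible p u" "\<not> x_dstar_suffix p u" "length u = k"
      "word_val p u = n - int c * m"
      using open_low[of "n - int c * m"] False assms(5) by (auto simp: m_def S_def)
    then show ?thesis using assms(3)
      by (intro exI[of _ u] exI[of _ c]) (auto simp: word_val_snoc m_def)
  qed
qed

lemma exists_admissible_of_length:
  "(\<forall>n. metallic_sum p k \<le> n \<and> n < metallic_sum p (Suc k) \<longrightarrow>
      (\<exists>w. admissible p w \<and> length w = k \<and> word_val p w = n)) \<and>
   (\<forall>n. metallic_sum p k \<le> n \<and> n \<le> (int p - 3) * metallic_sum p k \<longrightarrow>
      (\<exists>w. admissible p w \<and> \<not> x_dstar_suffix p w \<and> length w = k \<and> word_val p w = n))"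
proof (induction k)
  case 0
  then show ?case by (auto intro: exI[of _ "[]"])
next
  case (Suc k)
  have step: "\<exists>u a. admissible p u \<and> length u = k \<and> 1 \<le> a \<and> a \<le> c \<and>
      (a = c \<longrightarrow> \<not> x_dstar_suffix p u) \<and> word_val p (u @ [a]) = n"
    if "1 \<le> c" "metallic_sum p (Suc k) \<le> n" "n \<le> int c * metallic p k + (int p - 3) * metallic_sum p k"
    for n :: int and c
    using exists_admissible_snoc_with_top_digit[OF _ _ that] Suc.IH by blast
  have any: "\<exists>w. admissible p w \<and> length w = Suc k \<and> word_val p w = n"
    if lo: "metallic_sum p (Suc k) \<le> n" and hi: "n < metallic_sum p (Suc (Suc k))" for n
  proof -
    have "n \<le> int (p - 2) * metallic p k + (int p - 3) * metallic_sum p k"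
      using hi p_ge_4 metallic_sum_Suc_Suc[of k] by (simp add: of_nat_diff)
    moreover have "1 \<le> p - 2" using p_ge_4 by simp
    ultimately obtain u a where "admissible p u" "length u = k" "1 \<le> a" "a \<le> p - 2"
      "a = p - 2 \<longrightarrow> \<not> x_dstar_suffix p u" "word_val p (u @ [a]) = n"
      using step[OF _ lo] by blast
    then show ?thesis by (intro exI[of _ "u @ [a]"]) (auto simp: admissible_snoc)
  qed
  have "open": "\<exists>w. admissible p w \<and> \<not> x_dstar_suffix p w \<and> length w = Suc k \<and> word_val p w = n"
    if lo: "metallic_sum p (Suc k) \<le> n" and hi: "n \<le> (int p - 3) * metallic_sum p (Suc k)" for n
  proof -
    have "n \<le> int (p - 3) * metallic p k + (int p - 3) * metallic_sum p k"
      using hi p_ge_4 by (simp add: of_nat_diff algebra_simps)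
    moreover have "1 \<le> p - 3" using p_ge_4 by simp
    ultimately obtain u a where "admissible p u" "length u = k" "1 \<le> a" "a \<le> p - 3"
      "a = p - 3 \<longrightarrow> \<not> x_dstar_suffix p u" "word_val p (u @ [a]) = n"
      using step[OF _ lo] by blast
    then show ?thesis using p_ge_4
      by (intro exI[of _ "u @ [a]"]) (auto simp: admissible_snoc x_dstar_suffix_snoc)
  qed
  show ?case using any "open" by blast
qed

lemma metallic_sum_bracket: "\<exists>k. metallic_sum p k \<le> int n \<and> int n < metallic_sum p (Suc k)"
proof (induction n)
  case 0
  then show ?case using metallic_ge_1[of 0] by (intro exI[of _ 0]) simp
next
  case (Suc n)
  then obtain k where k: "metallic_sum p k \<le> int n" "int n < metallic_sum p (Suc k)" by blast
  show ?case
  proof (cases "int (Suc n) < metallic_sum p (Suc k)")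
    case False
    then show ?thesis using k metallic_ge_1[of "Suc k"] by (intro exI[of _ "Suc k"]) simp
  qed (use k in \<open>auto intro: exI[of _ k]\<close>)
qed

lemma exists_admissible: "\<exists>w. admissible p w \<and> word_val p w = int n"
  using metallic_sum_bracket[of n] exists_admissible_of_length by blast

lemma nzm_code_spec:
  assumes "0 < n"
  shows "nzm_word p (nzm_code p n) \<and> word_val p (nzm_code p n) = int n"
proof -
  obtain w where w: "admissible p w" "word_val p w = int n"
    using exists_admissible by blast
  then have "nzm_word p w" using assms by (auto simp: nzm_word_iff_admissible)
  moreover have "nzm_code p n = w" unfolding nzm_code_def
    using w calculation word_val_inj by (auto simp: nzm_word_iff_admissible)
  ultimately show ?thesis using w by simp
qed

definition nzm_digits :: "nat \<Rightarrow> nat list" where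
  "nzm_digits n = (if n = 0 then [] else nzm_code p n)"

lemma admissible_nzm_digits: "admissible p (nzm_digits n)"
  and word_val_nzm_digits: "word_val p (nzm_digits n) = int n"
  using nzm_code_spec[of n] by (auto simp: nzm_digits_def nzm_word_iff_admissible)

lemma nzm_digits_eqI: "admissible p w \<Longrightarrow> word_val p w = int n \<Longrightarrow> nzm_digits n = w"
  using word_val_inj admissible_nzm_digits word_val_nzm_digits by metis

lemma admissible_one_Cons: "admissible p w \<Longrightarrow> admissible p (1 # w)"
  using p_ge_4 by (auto simp: admissible_Cons)

lemma nzm_digits_Cons_tail:
  assumes "nzm_digits n = a # u"
  shows "nzm_digits (nat (word_val p u)) = u"
proof -
  have "admissible p u"
    using admissible_nzm_digits[of n] assms by (simp add: admissible_Cons)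
  then show ?thesis by (simp add: nzm_digits_eqI word_val_nonneg)
qed

(* Since nzm_digits 0 = [], the root 1 is the successor of 0. *)
definition succ_node :: "nat \<Rightarrow> nat" where
  "succ_node n = nat (word_val p (1 # nzm_digits n))"

lemma word_val_succ_node: "word_val p (1 # nzm_digits n) = int (succ_node n)"
  using word_val_nonneg[OF admissible_one_Cons[OF admissible_nzm_digits]] by (simp add: succ_node_def)

lemma nzm_digits_succ_node: "nzm_digits (succ_node n) = 1 # nzm_digits n"
  using nzm_digits_eqI[OF admissible_one_Cons[OF admissible_nzm_digits] word_val_succ_node] .

lemma succ_node_0: "succ_node 0 = 1"
  by (simp add: succ_node_def nzm_digits_def word_val_def)

lemma word_val_Cons_nzm_digits: "word_val p (a # nzm_digits n) = int (succ_node n) + int a - 1"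
  using word_val_Cons_diff[of p a "nzm_digits n" 1] word_val_succ_node[of n] by simp

definition max_low_digit :: "nat \<Rightarrow> nat" where
  "max_low_digit k = (if has_forbidden p ((p - 2) # nzm_digits k) then p - 3 else p - 2)"

lemma admissible_max_low_digit: "admissible p (max_low_digit k # nzm_digits k)"
  using admissible_nzm_digits[of k] p_ge_4 by (auto simp: max_low_digit_def admissible_Cons)

lemma le_max_low_digit: "admissible p (a # nzm_digits k) \<Longrightarrow> a \<le> max_low_digit k"
  using admissible_nzm_digits[of k] by (auto simp: max_low_digit_def admissible_Cons admissible_def)

lemma less_word_val_tail_if_above_max_low_digit:
  assumes au: "admissible p (a # u)"
    and above: "word_val p (max_low_digit k # nzm_digits k) < word_val p (a # u)"
  shows "int k < word_val p u"
proof (rule ccontr)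
  assume "\<not> int k < word_val p u"
  moreover have "admissible p u" using au by (simp add: admissible_Cons)
  ultimately consider "word_val p u < word_val p (nzm_digits k)" | "u = nzm_digits k"
    using word_val_inj[OF _ admissible_nzm_digits] word_val_nzm_digits[of k] by fastforce
  then show False
  proof cases
    case 1
    then show False using word_val_Cons_less[OF au admissible_max_low_digit, of k] above by simp
  next
    case 2
    then have "max_low_digit k < a"
      using above word_val_Cons_diff[of p a u "max_low_digit k"] by simp
    then show False using le_max_low_digit[of a k] au 2 by simp
  qed
qed

(* The integers with nzm-code a # nzm_digits k, for a = 1, ..., max_low_digit k, are consecutive,
   and the next integer is the successor of k + 1. *)
lemma succ_node_Suc_max_low_digit: "succ_node (Suc k) = succ_node k + max_low_digit k"
proof -
  define w x where "w = nzm_digits k" and "x = max_low_digit k"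
  have xw: "admissible p (x # w)" using admissible_max_low_digit by (simp add: w_def x_def)
  define n where "n = nat (word_val p (x # w)) + 1"
  have n: "int n = word_val p (x # w) + 1" using word_val_nonneg[OF xw] by (simp add: n_def)
  obtain a u where au: "nzm_digits n = a # u"
    using word_val_nzm_digits[of n] by (cases "nzm_digits n") (simp_all add: n_def del: of_nat_Suc)
  have adm_au: "admissible p (a # u)" and val_au: "word_val p (a # u) = int n"
    using admissible_nzm_digits[of n] word_val_nzm_digits[of n] au by auto
  then have u: "admissible p u" and "1 \<le> a" by (auto simp: admissible_Cons)
  have "int k < word_val p u"
    using less_word_val_tail_if_above_max_low_digit[OF adm_au] val_au n by (simp add: w_def x_def)
  define v where "v = nzm_digits (Suc k)"
  have v: "admissible p (1 # v)" "word_val p v = int (Suc k)"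
    using admissible_one_Cons admissible_nzm_digits word_val_nzm_digits by (simp_all add: v_def)
  have "word_val p (x # w) < word_val p (1 # v)"
    using word_val_Cons_less[OF xw v(1)] v(2) word_val_nzm_digits[of k] by (simp add: w_def)
  moreover have "word_val p (1 # v) \<le> word_val p (a # u)"
  proof (cases "word_val p u = int (Suc k)")
    case True
    then have "u = v" using word_val_inj[OF u] v admissible_nzm_digits by (simp add: v_def)
    then show ?thesis using word_val_Cons_diff[of p 1 u a] \<open>1 \<le> a\<close> by simp
  next
    case False
    then show ?thesis using word_val_Cons_less[OF v(1) adm_au] v(2) \<open>int k < word_val p u\<close> by simp
  qed
  ultimately have "word_val p (1 # v) = word_val p (x # w) + 1" using val_au n by simp
  then show ?thesis using word_val_succ_node[of "Suc k"] word_val_Cons_nzm_digits[of x k]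
    by (simp add: v_def w_def x_def)
qed

lemma succ_node_if_forbidden:
  assumes "has_forbidden p ((p - 2) # nzm_digits k)"
  shows "\<exists>j. succ_node (Suc j) = Suc k"
proof -
  have "dstar_x_prefix p (nzm_digits k)"
    using assms admissible_nzm_digits[of k] by (simp add: admissible_def)
  then obtain a u where au: "nzm_digits k = a # u"
    by (cases "nzm_digits k") auto
  define j where "j = nat (word_val p u)"
  have u: "nzm_digits j = u" using nzm_digits_Cons_tail[OF au] by (simp add: j_def)
  have "a = max_low_digit j"
  proof -
    have "a \<le> max_low_digit j" using le_max_low_digit[of a j] admissible_nzm_digits[of k] au u by simp
    moreover have "a = p - 2 \<or> (a = p - 3 \<and> dstar_x_prefix p u)"
      using \<open>dstar_x_prefix p (nzm_digits k)\<close> au by simp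
    ultimately show ?thesis using u by (auto simp: max_low_digit_def)
  qed
  then have "int k = int (succ_node j) + int (max_low_digit j) - 1"
    using word_val_nzm_digits[of k] word_val_Cons_nzm_digits[of a j] au u by simp
  then show ?thesis using succ_node_Suc_max_low_digit[of j] by (intro exI[of _ j]) simp
qed

lemma forbidden_if_succ_node:
  assumes "succ_node (Suc j) = Suc k"
  shows "has_forbidden p ((p - 2) # nzm_digits k)"
proof -
  have "word_val p (max_low_digit j # nzm_digits j) = int k"
    using assms succ_node_Suc_max_low_digit[of j] word_val_Cons_nzm_digits by simp
  then have "nzm_digits k = max_low_digit j # nzm_digits j"
    using nzm_digits_eqI admissible_max_low_digit by simp
  moreover have "\<not> has_forbidden p (nzm_digits j)"
    using admissible_nzm_digits by (simp add: admissible_def)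
  ultimately show ?thesis by (auto simp: max_low_digit_def)
qed

definition is_succ_node :: "nat \<Rightarrow> bool" where
  "is_succ_node v \<longleftrightarrow> (\<exists>\<mu>\<ge>1. succ_node \<mu> = v)"

(* In the tree of the rightmost assignment, the black nodes are exactly the successors, and
   degree v is the number of sons of v, which is also the position of its black son. *)
definition degree :: "nat \<Rightarrow> nat" where
  "degree v = (if is_succ_node v then p - 3 else p - 2)"

lemma max_low_digit_eq_degree: "max_low_digit k = degree (Suc k)"
proof -
  have "has_forbidden p ((p - 2) # nzm_digits k) \<longleftrightarrow> is_succ_node (Suc k)"
    using succ_node_if_forbidden[of k] forbidden_if_succ_node[of _ k]
    by (auto simp: is_succ_node_def Suc_le_eq gr0_conv_Suc)
  then show ?thesis by (simp add: max_low_digit_def degree_def)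
qed

lemma succ_node_Suc: "succ_node (Suc k) = succ_node k + degree (Suc k)"
  by (simp add: succ_node_Suc_max_low_digit max_low_digit_eq_degree)

lemma degree_pos: "0 < degree v"
  using p_ge_4 by (auto simp: degree_def)

lemma succ_node_strict_mono: "strict_mono succ_node"
  unfolding strict_mono_Suc_iff using degree_pos by (simp add: succ_node_Suc)

lemma less_succ_node: "k < succ_node k"
proof (induction k)
  case (Suc k)
  then show ?case using degree_pos[of "Suc k"] by (simp add: succ_node_Suc)
qed (simp add: succ_node_0)

lemma is_succ_node_between:
  assumes "succ_node k < v" "v \<le> succ_node (Suc k)"
  shows "is_succ_node v \<longleftrightarrow> v = succ_node (Suc k)"
proof
  assume "is_succ_node v"
  then obtain \<mu> where "succ_node \<mu> = v" by (auto simp: is_succ_node_def)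
  with assms have "k < \<mu>" "\<mu> \<le> Suc k"
    using strict_mono_less[OF succ_node_strict_mono] strict_mono_less_eq[OF succ_node_strict_mono]
    by metis+
  then show "v = succ_node (Suc k)" using \<open>succ_node \<mu> = v\<close> by (simp add: le_Suc_eq)
qed (auto simp: is_succ_node_def)

lemma not_is_succ_node_1: "\<not> is_succ_node 1"
proof
  assume "is_succ_node 1"
  then obtain \<mu> where "1 \<le> \<mu>" "succ_node \<mu> = 1" by (auto simp: is_succ_node_def)
  with less_succ_node[of \<mu>] show False by simp
qed

end

lemma fst_build_Suc:
  "fst (build p \<alpha> (Suc k)) = fst (build p \<alpha> k) + (if snd (build p \<alpha> k) (Suc k) then p - 2 else p - 3)"
  by (cases "build p \<alpha> k") (simp add: Let_def)

lemma snd_build_Suc: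
  "snd (build p \<alpha> (Suc k)) v =
    (if fst (build p \<alpha> k) \<le> v \<and> v < fst (build p \<alpha> (Suc k))
     then v \<noteq> fst (build p \<alpha> k) + \<alpha> (Suc k) - 1 else snd (build p \<alpha> k) v)"
  by (cases "build p \<alpha> k") (simp add: Let_def)

declare build.simps(2) [simp del]

lemma fst_build_mono: "k \<le> t \<Longrightarrow> fst (build p \<alpha> k) \<le> fst (build p \<alpha> t)"
  by (induction t rule: dec_induct) (simp_all add: fst_build_Suc trans_le_add1)

lemma snd_build_stable:
  "k \<le> t \<Longrightarrow> v < fst (build p \<alpha> k) \<Longrightarrow> snd (build p \<alpha> t) v = snd (build p \<alpha> k) v"
proof (induction t rule: dec_induct)
  case (step t)
  then show ?case using fst_build_mono[of k t p \<alpha>] by (simp add: snd_build_Suc)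
qed simp

context metallic_base
begin

definition processed_as_rightmost :: "(nat \<Rightarrow> nat) \<Rightarrow> nat \<Rightarrow> bool" where
  "processed_as_rightmost \<alpha> k \<longleftrightarrow> fst (build p \<alpha> k) = succ_node k + 1 \<and>
     (\<forall>v. 1 \<le> v \<and> v \<le> succ_node k \<longrightarrow> snd (build p \<alpha> k) v = (\<not> is_succ_node v))"

lemma processed_as_rightmost_0: "processed_as_rightmost \<alpha> 0"
  using not_is_succ_node_1 by (auto simp: processed_as_rightmost_def succ_node_0)

lemma fst_build_eq_succ_node:
  assumes "k \<le> t" "t \<le> succ_node k" "fst (build p \<alpha> k) = succ_node k + 1"
    and "\<And>v. k < v \<Longrightarrow> v \<le> t \<Longrightarrow> snd (build p \<alpha> k) v = (\<not> is_succ_node v)"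
  shows "fst (build p \<alpha> t) = succ_node t + 1"
  using assms(1)
proof (induction t rule: dec_induct)
  case (step t)
  have "snd (build p \<alpha> t) (Suc t) = snd (build p \<alpha> k) (Suc t)"
    using snd_build_stable[OF step.hyps(1)] step.hyps(2) assms(2,3) by simp
  also have "\<dots> = (\<not> is_succ_node (Suc t))"
    using assms(4) step.hyps by simp
  finally show ?case using step.IH by (simp add: fst_build_Suc succ_node_Suc degree_def)
qed (use assms(3) in simp)

lemma fst_build_Suc_if_processed:
  assumes "processed_as_rightmost \<alpha> k"
  shows "fst (build p \<alpha> (Suc k)) = succ_node (Suc k) + 1"
proof (rule fst_build_eq_succ_node)
  show "Suc k \<le> succ_node k" using less_succ_node[of k] by simp
  show "fst (build p \<alpha> k) = succ_node k + 1"
    "\<And>v. k < v \<Longrightarrow> v \<le> Suc k \<Longrightarrow> snd (build p \<alpha> k) v = (\<not> is_succ_node v)"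
    using assms \<open>Suc k \<le> succ_node k\<close> unfolding processed_as_rightmost_def by auto
qed simp

lemma nsons_if_processed:
  assumes "processed_as_rightmost \<alpha> k"
  shows "nsons p \<alpha> (Suc k) = degree (Suc k)"
  using assms fst_build_Suc_if_processed[OF assms]
  unfolding nsons_def processed_as_rightmost_def by (simp add: succ_node_Suc)

lemma snd_build_Suc_if_processed:
  assumes "processed_as_rightmost \<alpha> k" "1 \<le> v" "v \<le> succ_node (Suc k)"
  shows "snd (build p \<alpha> (Suc k)) v =
    (if v \<le> succ_node k then \<not> is_succ_node v else v \<noteq> succ_node k + \<alpha> (Suc k))"
proof -
  have F: "fst (build p \<alpha> k) = succ_node k + 1" "fst (build p \<alpha> (Suc k)) = succ_node (Suc k) + 1"
    using assms(1) fst_build_Suc_if_processed by (simp_all add: processed_as_rightmost_def)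
  show ?thesis
  proof (cases "v \<le> succ_node k")
    case True
    then have "snd (build p \<alpha> (Suc k)) v = snd (build p \<alpha> k) v"
      using F(1) by (simp add: snd_build_Suc)
    then show ?thesis using True assms(1,2) by (simp add: processed_as_rightmost_def)
  next
    case False
    then show ?thesis using F assms(3) by (simp add: snd_build_Suc)
  qed
qed

lemma processed_as_rightmost_Suc:
  assumes "processed_as_rightmost \<alpha> k" "\<alpha> (Suc k) = degree (Suc k)"
  shows "processed_as_rightmost \<alpha> (Suc k)"
  unfolding processed_as_rightmost_def
proof (intro conjI allI impI)
  show "fst (build p \<alpha> (Suc k)) = succ_node (Suc k) + 1"
    using assms(1) by (rule fst_build_Suc_if_processed)
  fix v assume v: "1 \<le> v \<and> v \<le> succ_node (Suc k)"
  have "succ_node k + \<alpha> (Suc k) = succ_node (Suc k)"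
    using assms(2) by (simp add: succ_node_Suc)
  then show "snd (build p \<alpha> (Suc k)) v = (\<not> is_succ_node v)"
    using snd_build_Suc_if_processed[OF assms(1), of v] v is_succ_node_between[of k v] by simp
qed

lemma processed_as_rightmost_if_agrees:
  "(\<And>\<mu>. 1 \<le> \<mu> \<Longrightarrow> \<mu> \<le> k \<Longrightarrow> \<alpha> \<mu> = degree \<mu>) \<Longrightarrow> processed_as_rightmost \<alpha> k"
  by (induction k) (simp_all add: processed_as_rightmost_0 processed_as_rightmost_Suc del: One_nat_def)

lemma eq_degree_if_processed_step:
  assumes "\<And>k. processed_as_rightmost \<alpha> k \<Longrightarrow> \<alpha> (Suc k) = degree (Suc k)" "1 \<le> \<nu>"
  shows "\<alpha> \<nu> = degree \<nu>"
  using assms(2)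
proof (induction \<nu> rule: less_induct)
  case (less \<nu>)
  then obtain k where "\<nu> = Suc k" by (cases \<nu>) auto
  moreover have "processed_as_rightmost \<alpha> k"
    using less.IH \<open>\<nu> = Suc k\<close> by (intro processed_as_rightmost_if_agrees) simp
  ultimately show ?case using assms(1) by simp
qed

lemma is_rightmost_degree: "is_rightmost p degree"
  unfolding is_rightmost_def
proof (intro allI impI)
  fix \<nu> :: nat assume "1 \<le> \<nu>"
  then obtain k where "\<nu> = Suc k" by (cases \<nu>) auto
  then show "degree \<nu> = nsons p degree \<nu>"
    using nsons_if_processed processed_as_rightmost_if_agrees by simp
qed

lemma rightmost_eq_degree: "is_rightmost p \<rho> \<Longrightarrow> 1 \<le> \<nu> \<Longrightarrow> \<rho> \<nu> = degree \<nu>"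
  by (rule eq_degree_if_processed_step) (simp_all add: is_rightmost_def nsons_if_processed)

lemma is_son_rightmost_iff:
  assumes "is_rightmost p \<rho>"
  shows "is_son p \<rho> (Suc k) \<mu> \<longleftrightarrow> succ_node k < \<mu> \<and> \<mu> \<le> succ_node (Suc k)"
proof -
  have "processed_as_rightmost \<rho> k" "processed_as_rightmost \<rho> (Suc k)"
    using rightmost_eq_degree[OF assms] by (simp_all add: processed_as_rightmost_if_agrees)
  then show ?thesis by (auto simp: is_son_def processed_as_rightmost_def)
qed

(* If the black son of node k + 1 sat at a position j before the last one, the white nodes
   up to j - 1 would still get their sons as in the rightmost tree, but the black node j would
   get one son too few, so that its successor would not be among its sons. *)
lemma eq_degree_if_succ_node_sons:
  assumes valid: "valid_assignment p \<alpha>" and sons: "\<And>\<nu>. 1 \<le> \<nu> \<Longrightarrow> is_son p \<alpha> \<nu> (succ_node \<nu>)"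
    and processed: "processed_as_rightmost \<alpha> k"
  shows "\<alpha> (Suc k) = degree (Suc k)"
proof (rule ccontr)
  assume "\<alpha> (Suc k) \<noteq> degree (Suc k)"
  moreover have "1 \<le> \<alpha> (Suc k) \<and> \<alpha> (Suc k) \<le> nsons p \<alpha> (Suc k)"
    using valid unfolding valid_assignment_def by simp
  ultimately have \<alpha>: "1 \<le> \<alpha> (Suc k)" "\<alpha> (Suc k) < degree (Suc k)"
    using nsons_if_processed[OF processed] by simp_all
  have F: "fst (build p \<alpha> (Suc k)) = succ_node (Suc k) + 1"
    using fst_build_Suc_if_processed[OF processed] .
  define j where "j = succ_node k + \<alpha> (Suc k)"
  have j: "succ_node k < j" "j < succ_node (Suc k)" "Suc k < j"
    using \<alpha> less_succ_node[of k] by (auto simp: j_def succ_node_Suc)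
  have black_j: "\<not> snd (build p \<alpha> (Suc k)) j"
    using snd_build_Suc_if_processed[OF processed, of j] j by (simp add: j_def)
  obtain i where i: "j = Suc i" using j(3) by (cases j) auto
  have white_before_j: "snd (build p \<alpha> (Suc k)) v = (\<not> is_succ_node v)" if "Suc k < v" "v \<le> i" for v
  proof (cases "v \<le> succ_node k")
    case True
    then show ?thesis using snd_build_Suc_if_processed[OF processed, of v] that j by simp
  next
    case False
    then have "\<not> is_succ_node v" using is_succ_node_between[of k v] that i j by simp
    moreover have "v \<noteq> succ_node k + \<alpha> (Suc k)" using that i by (simp add: j_def)
    ultimately show ?thesis using snd_build_Suc_if_processed[OF processed, of v] False that i j by simp
  qed
  have "Suc k \<le> i" "i \<le> succ_node (Suc k)" using i j by simp_all
  then have "fst (build p \<alpha> i) = succ_node i + 1"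
    using fst_build_eq_succ_node[of "Suc k" i, OF _ _ F white_before_j] by simp
  moreover have "\<not> snd (build p \<alpha> i) j"
    using snd_build_stable[of "Suc k" i j] \<open>Suc k \<le> i\<close> black_j j F by simp
  moreover have "\<not> is_succ_node j"
    using is_succ_node_between[of k j] j by simp
  ultimately have "fst (build p \<alpha> j) = succ_node j"
    using fst_build_Suc[of p \<alpha> i] succ_node_Suc[of i] p_ge_4 by (simp add: i degree_def)
  then show False using sons[of j] j by (simp add: is_son_def)
qed

lemma nzm_digits_eq_nzm_code: "0 < n \<Longrightarrow> nzm_digits n = nzm_code p n"
  by (simp add: nzm_digits_def)

lemma nzm_succ_eq_succ_node:
  assumes "1 \<le> \<nu>"
  shows "nzm_succ p \<nu> = succ_node \<nu>"
  unfolding nzm_succ_def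
proof (rule the_equality)
  have "0 < succ_node \<nu>" using less_succ_node[of \<nu>] by simp
  then show "0 < succ_node \<nu> \<and> nzm_code p (succ_node \<nu>) = 1 # nzm_code p \<nu>"
    using nzm_digits_succ_node[of \<nu>] assms by (simp add: nzm_digits_eq_nzm_code)
next
  fix n assume "0 < n \<and> nzm_code p n = 1 # nzm_code p \<nu>"
  then have "nzm_digits n = 1 # nzm_digits \<nu>" using assms by (simp add: nzm_digits_eq_nzm_code)
  then have "int n = int (succ_node \<nu>)" using word_val_nzm_digits[of n] word_val_succ_node[of \<nu>] by simp
  then show "n = succ_node \<nu>" by simp
qed

lemma eq_succ_node_if_hd_nzm_code:
  assumes "succ_node k < \<mu>" "\<mu> \<le> succ_node (Suc k)" "hd (nzm_code p \<mu>) = 1"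
  shows "\<mu> = succ_node (Suc k)"
proof -
  have "nzm_digits \<mu> \<noteq> []" using word_val_nzm_digits[of \<mu>] assms(1) by auto
  then obtain u where u: "nzm_digits \<mu> = 1 # u"
    using assms(1,3) by (cases "nzm_digits \<mu>") (auto simp: nzm_digits_eq_nzm_code)
  define j where "j = nat (word_val p u)"
  have "nzm_digits j = u" using nzm_digits_Cons_tail[OF u] by (simp add: j_def)
  then have "int \<mu> = int (succ_node j)" using word_val_nzm_digits[of \<mu>] word_val_succ_node[of j] u by simp
  then have "\<mu> = succ_node j" by simp
  with assms(1,2) have "k < j" "j \<le> Suc k"
    using strict_mono_less[OF succ_node_strict_mono] strict_mono_less_eq[OF succ_node_strict_mono]
    by metis+
  then show ?thesis using \<open>\<mu> = succ_node j\<close> by (simp add: le_Suc_eq)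
qed

lemma rightmost_son_nzm_succ:
  assumes "is_rightmost p \<rho>" "1 \<le> \<nu>"
  shows "is_son p \<rho> \<nu> (nzm_succ p \<nu>)"
proof -
  obtain k where \<nu>: "\<nu> = Suc k" using assms(2) by (cases \<nu>) auto
  have "succ_node k < succ_node \<nu>"
    using succ_node_strict_mono by (simp add: \<nu> strict_mono_less)
  then show ?thesis
    using is_son_rightmost_iff[OF assms(1)] nzm_succ_eq_succ_node[OF assms(2)] by (simp add: \<nu>)
qed

lemma eq_nzm_succ_if_rightmost_son:
  assumes "is_rightmost p \<rho>" "1 \<le> \<nu>" "is_son p \<rho> \<nu> \<mu>" "hd (nzm_code p \<mu>) = 1"
  shows "\<mu> = nzm_succ p \<nu>"
proof -
  obtain k where \<nu>: "\<nu> = Suc k" using assms(2) by (cases \<nu>) auto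
  then show ?thesis
    using assms eq_succ_node_if_hd_nzm_code[of k \<mu>] is_son_rightmost_iff[OF assms(1)]
      nzm_succ_eq_succ_node[OF assms(2)]
    by simp
qed

lemma eq_degree_if_nzm_succ_sons:
  assumes "valid_assignment p \<alpha>" "\<forall>\<nu>\<ge>1. is_son p \<alpha> \<nu> (nzm_succ p \<nu>)" "1 \<le> \<nu>"
  shows "\<alpha> \<nu> = degree \<nu>"
proof -
  have "is_son p \<alpha> \<nu> (succ_node \<nu>)" if "1 \<le> \<nu>" for \<nu>
    using assms(2) that nzm_succ_eq_succ_node by simp
  then show ?thesis
    using eq_degree_if_processed_step[OF eq_degree_if_succ_node_sons[OF assms(1)] assms(3)] by blast
qed

end

theorem theorem9:
  fixes p :: nat
  assumes "p \<ge> 5"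
  shows "(\<exists>\<rho>. is_rightmost p \<rho>) \<and>
    (\<forall>\<rho>. is_rightmost p \<rho> \<longrightarrow>
      (\<forall>\<nu>\<ge>1. is_son p \<rho> \<nu> (nzm_succ p \<nu>) \<and>
         (\<forall>\<mu>. is_son p \<rho> \<nu> \<mu> \<and> hd (nzm_code p \<mu>) = 1 \<longrightarrow> \<mu> = nzm_succ p \<nu>)) \<and>
      (\<forall>\<alpha>. valid_assignment p \<alpha> \<and> (\<forall>\<nu>\<ge>1. is_son p \<alpha> \<nu> (nzm_succ p \<nu>))
           \<longrightarrow> (\<forall>\<nu>\<ge>1. \<alpha> \<nu> = \<rho> \<nu>)))"
proof -
  interpret metallic_base p
    using assms by unfold_locales simp
  show ?thesis
  proof (intro conjI allI impI)
    show "\<exists>\<rho>. is_rightmost p \<rho>" using is_rightmost_degree by blast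
  next
    fix \<rho> and \<nu> :: nat assume "is_rightmost p \<rho>" "1 \<le> \<nu>"
    then show "is_son p \<rho> \<nu> (nzm_succ p \<nu>)" by (rule rightmost_son_nzm_succ)
  next
    fix \<rho> and \<nu> \<mu> :: nat assume "is_rightmost p \<rho>" "1 \<le> \<nu>" "is_son p \<rho> \<nu> \<mu> \<and> hd (nzm_code p \<mu>) = 1"
    then show "\<mu> = nzm_succ p \<nu>" using eq_nzm_succ_if_rightmost_son by blast
  next
    fix \<rho> \<alpha> and \<nu> :: nat
    assume "is_rightmost p \<rho>" "valid_assignment p \<alpha> \<and> (\<forall>\<nu>\<ge>1. is_son p \<alpha> \<nu> (nzm_succ p \<nu>))" "1 \<le> \<nu>"
    then show "\<alpha> \<nu> = \<rho> \<nu>" using eq_degree_if_nzm_succ_sons rightmost_eq_degree by simp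
  qed
qed

end
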